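(* Consider a system with a finite set $S$ of tasks, periods $\tau_X$, frame length $T=\mathrm{lcm}\{\tau_X : X\in S\}$, per-execution rewards $r^1_X\ge r^2_X\ge\dots\ge r^{\tau_X}_X\ge 0$ and minimum average reward requirements $q^*_X>0$ (as described in the context). The system is feasible only if there exist real numbers $\{f^i_X : X\in S,\ 1\le i\le \tau_X\}$ such that (1) $q^*_X\le \sum_{i=1}^{\tau_X} f^i_X r^i_X$ for all $X\in S$; (2) $0\le f^i_X\le T/\tau_X$ for all $X\in S$ and $1\le i\le\tau_X$; (3) $\sum_{X\in S}\sum_{i=1}^{\tau_X} f^i_X\le T$.
   Context: A system consists of a finite set $S$ of tasks. Time is slotted, $t\in\{0,1,2,\dots\}$. Each task $X\in S$ has a period $\tau_X$ (a positive integer); time is partitioned into consecutive periods of $X$ of $\tau_X$ slots each, the first starting at $t=0$. In each period, task $X$ has one job, which is removed from the system at the end of that period. Let $T$ be the least common multiple of $\{\tau_X : X\in S\}$; time is partitioned into consecutive frames of $T$ slots each, the first starting at $t=0$, so each frame contains $T/\tau_X$ periods of $X$. A scheduling policy (possibly randomized, possibly history dependent) chooses in each time slot either to idle or to execute the job of exactly one task; a job may be executed in any number of slots within its period. Each task $X$ has rewards $r^1_X\ge r^2_X\ge\dots\ge r^{\tau_X}_X\ge 0$: when the job of $X$ is executed for the $i$-th time within a period, $X$ obtains reward $r^i_X$. Let $s_X(t)$ be the total reward obtained by $X$ between time $0$ and time $t$; the average reward of $X$ is $q_X=\liminf_{t\to\infty} s_X(t)/(t/T)$. Each task has a minimum average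 reward requirement $q^*_X>0$. A policy fulfills the system if under it $q_X\ge q^*_X$ with probability 1 for all $X\in S$. The system is feasible if some scheduling policy fulfills it. *)

theory Defs
  imports "HOL-Probability.Probability"
begin

text \<open>A schedule is a function from time slots to \<open>'a option\<close>:
  \<open>None\<close> means idle, \<open>Some X\<close> means the job of task X is executed.\<close>

definition exec_index :: "('a \<Rightarrow> nat) \<Rightarrow> (nat \<Rightarrow> 'a option) \<Rightarrow> 'a \<Rightarrow> nat \<Rightarrow> nat" where
  "exec_index tau \<sigma> X u =
     card {u'. u' \<le> u \<and> u' div tau X = u div tau X \<and> \<sigma> u' = Some X}"

definition slot_reward ::
  "('a \<Rightarrow> nat) \<Rightarrow> ('a \<Rightarrow> nat \<Rightarrow> real) \<Rightarrow> (nat \<Rightarrow> 'a option) \<Rightarrow> 'a \<Rightarrow> nat \<Rightarrow> real" where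
  "slot_reward tau r \<sigma> X u =
     (if \<sigma> u = Some X then r X (exec_index tau \<sigma> X u) else 0)"

definition total_reward ::
  "('a \<Rightarrow> nat) \<Rightarrow> ('a \<Rightarrow> nat \<Rightarrow> real) \<Rightarrow> (nat \<Rightarrow> 'a option) \<Rightarrow> 'a \<Rightarrow> nat \<Rightarrow> real" where
  "total_reward tau r \<sigma> X t = (\<Sum>u<t. slot_reward tau r \<sigma> X u)"

definition frame_len :: "'a set \<Rightarrow> ('a \<Rightarrow> nat) \<Rightarrow> nat" where
  "frame_len S tau = Lcm (tau ` S)"

definition avg_reward ::
  "'a set \<Rightarrow> ('a \<Rightarrow> nat) \<Rightarrow> ('a \<Rightarrow> nat \<Rightarrow> real) \<Rightarrow> (nat \<Rightarrow> 'a option) \<Rightarrow> 'a \<Rightarrow> ereal" where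
  "avg_reward S tau r \<sigma> X =
     liminf (\<lambda>t. ereal (total_reward tau r \<sigma> X t / (real t / real (frame_len S tau))))"

text \<open>A (possibly randomized, history-dependent) policy is represented by the random
  schedule it generates: a process \<open>sched\<close> on a probability space M.\<close>
definition fulfills ::
  "'b measure \<Rightarrow> ('b \<Rightarrow> nat \<Rightarrow> 'a option) \<Rightarrow> 'a set \<Rightarrow> ('a \<Rightarrow> nat) \<Rightarrow>
   ('a \<Rightarrow> nat \<Rightarrow> real) \<Rightarrow> ('a \<Rightarrow> real) \<Rightarrow> bool" where
  "fulfills M sched S tau r qstar \<longleftrightarrow>
     prob_space M \<and>
     (\<forall>\<omega>\<in>space M. \<forall>t. sched \<omega> t \<in> insert None (Some ` S)) \<and>
     (\<forall>X\<in>S. AE \<omega> in M. ereal (qstar X) \<le> avg_reward S tau r (sched \<omega>) X)"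

end

theory Submission imports Defs begin

text \<open>Since the requirements hold almost surely, some single realised schedule \<open>\<sigma>\<close> meets all
  of them. Within the first \<open>N\<close> frames let \<open>c\<^sup>i\<^sub>X\<close> count the slots in which \<open>X\<close> is executed
  for the \<open>i\<close>-th time in its period. The execution indices within one period are distinct, so
  \<open>c\<^sup>i\<^sub>X\<close> is at most the number \<open>N T / \<tau>\<^sub>X\<close> of periods; the slots counted for different
  \<open>(X, i)\<close> are distinct, so the counts sum to at most \<open>N T\<close>; and the reward of \<open>X\<close> collected
  is \<open>\<Sum>\<^sub>i c\<^sup>i\<^sub>X r\<^sup>i\<^sub>X\<close>. Hence the frequencies \<open>c\<^sup>i\<^sub>X / N\<close> satisfy (2) and (3) exactly, and (1)
  up to any \<open>\<epsilon> > 0\<close> once \<open>N\<close> is chosen from the liminf. A convergent subsequence of these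
  bounded frequency vectors, for \<open>\<epsilon> \<rightarrow> 0\<close>, converges to a solution.\<close>

lemma (in prob_space) AE_imp_ex_in_space:
  assumes "AE x in M. P x"
  shows "\<exists>x\<in>space M. P x"
proof (rule ccontr)
  assume "\<not> (\<exists>x\<in>space M. P x)"
  with assms have "AE x in M. False"
    by auto
  then show False
    by (simp add: AE_False)
qed

lemma frame_len_pos:
  assumes "finite S" and "\<And>X. X \<in> S \<Longrightarrow> tau X > 0"
  shows "frame_len S tau > 0"
proof -
  have "0 \<notin> tau ` S"
    using assms(2) by fastforce
  then have "Lcm (tau ` S) \<noteq> 0"
    using assms(1) by simp
  then show ?thesis
    unfolding frame_len_def by simp
qed

lemma dvd_frame_len: "X \<in> S \<Longrightarrow> tau X dvd frame_len S tau"
  unfolding frame_len_def by (simp add: dvd_Lcm)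

lemma exec_index_range:
  assumes "tau X > 0" and "\<sigma> u = Some X"
  shows "exec_index tau \<sigma> X u \<in> {1..tau X}"
proof -
  let ?A = "{u'. u' \<le> u \<and> u' div tau X = u div tau X \<and> \<sigma> u' = Some X}"
  let ?p = "u div tau X * tau X"
  have "?A \<subseteq> {?p..<?p + tau X}"
  proof
    fix v assume "v \<in> ?A"
    then have "v div tau X = u div tau X" by simp
    moreover have "v = v div tau X * tau X + v mod tau X" by (rule div_mult_mod_eq[symmetric])
    moreover have "v mod tau X < tau X" using assms(1) by simp
    ultimately show "v \<in> {?p..<?p + tau X}" by auto
  qed
  then have "card ?A \<le> tau X"
    using card_mono[of "{?p..<?p + tau X}"] by simp
  moreover have "u \<in> ?A" and "finite ?A"
    using assms(2) by (auto intro: finite_subset[of _ "{..u}"])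
  then have "card ?A \<ge> 1"
    by (metis One_nat_def Suc_leI card_gt_0_iff empty_iff)
  ultimately show ?thesis
    unfolding exec_index_def by simp
qed

lemma exec_index_strict_mono:
  assumes "\<sigma> a = Some X" and "\<sigma> b = Some X" and "a div tau X = b div tau X" and "a < b"
  shows "exec_index tau \<sigma> X a < exec_index tau \<sigma> X b"
proof -
  let ?A = "{u'. u' \<le> a \<and> u' div tau X = a div tau X \<and> \<sigma> u' = Some X}"
  let ?B = "{u'. u' \<le> b \<and> u' div tau X = b div tau X \<and> \<sigma> u' = Some X}"
  have "?A \<subseteq> ?B" and "b \<in> ?B - ?A"
    using assms by auto
  then have "?A \<subset> ?B"
    by blast
  moreover have "finite ?B"
    by (auto intro: finite_subset[of _ "{..b}"])
  ultimately show ?thesis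
    unfolding exec_index_def by (simp add: psubset_card_mono)
qed

lemma exec_index_inj_on_period:
  assumes "\<sigma> u = Some X" and "\<sigma> v = Some X" and "u div tau X = v div tau X"
    and "exec_index tau \<sigma> X u = exec_index tau \<sigma> X v"
  shows "u = v"
  using exec_index_strict_mono[of \<sigma> u X v tau] exec_index_strict_mono[of \<sigma> v X u tau] assms
  by (metis less_irrefl linorder_neqE_nat)

definition exec_count :: "('a \<Rightarrow> nat) \<Rightarrow> (nat \<Rightarrow> 'a option) \<Rightarrow> nat \<Rightarrow> 'a \<Rightarrow> nat \<Rightarrow> nat" where
  "exec_count tau \<sigma> L X i = card {u. u < L \<and> \<sigma> u = Some X \<and> exec_index tau \<sigma> X u = i}"

lemma sum_executions_by_index:
  fixes g :: "nat \<Rightarrow> 'b::comm_semiring_1"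
  assumes "tau X > 0"
  shows "(\<Sum>u | u < L \<and> \<sigma> u = Some X. g (exec_index tau \<sigma> X u))
       = (\<Sum>i=1..tau X. of_nat (exec_count tau \<sigma> L X i) * g i)"
proof -
  let ?B = "{u. u < L \<and> \<sigma> u = Some X}"
  have "exec_index tau \<sigma> X ` ?B \<subseteq> {1..tau X}"
    using exec_index_range[of tau X \<sigma>] assms by blast
  then have "(\<Sum>u\<in>?B. g (exec_index tau \<sigma> X u))
      = (\<Sum>i=1..tau X. \<Sum>u | u \<in> ?B \<and> exec_index tau \<sigma> X u = i. g (exec_index tau \<sigma> X u))"
    by (intro sum.group[symmetric]) simp_all
  also have "\<dots> = (\<Sum>i=1..tau X. \<Sum>u | u \<in> ?B \<and> exec_index tau \<sigma> X u = i. g i)"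
    by (intro sum.cong) auto
  also have "\<dots> = (\<Sum>i=1..tau X. of_nat (exec_count tau \<sigma> L X i) * g i)"
    by (simp add: exec_count_def)
  finally show ?thesis .
qed

lemma total_reward_eq_exec_count:
  assumes "tau X > 0"
  shows "total_reward tau r \<sigma> X L = (\<Sum>i=1..tau X. real (exec_count tau \<sigma> L X i) * r X i)"
proof -
  have "total_reward tau r \<sigma> X L = (\<Sum>u | u < L \<and> \<sigma> u = Some X. r X (exec_index tau \<sigma> X u))"
    unfolding total_reward_def slot_reward_def
    by (simp add: sum.If_cases Collect_conj_eq lessThan_def Int_commute)
  then show ?thesis
    using sum_executions_by_index[where tau=tau and X=X and L=L and \<sigma>=\<sigma> and g="r X"] assms by simp
qed

lemma sum_exec_count_eq_card:
  assumes "tau X > 0"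
  shows "(\<Sum>i=1..tau X. exec_count tau \<sigma> L X i) = card {u. u < L \<and> \<sigma> u = Some X}"
  using sum_executions_by_index[where tau=tau and X=X and L=L and \<sigma>=\<sigma> and g="\<lambda>_. 1::nat"] assms by simp

text \<open>Distinct slots with the same execution index lie in distinct periods.\<close>

lemma exec_count_le_periods:
  assumes "tau X > 0" and "tau X dvd L"
  shows "exec_count tau \<sigma> L X i \<le> L div tau X"
proof -
  let ?C = "{u. u < L \<and> \<sigma> u = Some X \<and> exec_index tau \<sigma> X u = i}"
  have "inj_on (\<lambda>u. u div tau X) ?C"
    by (intro inj_onI) (auto intro: exec_index_inj_on_period)
  moreover have "(\<lambda>u. u div tau X) ` ?C \<subseteq> {..<L div tau X}"
    using assms by (auto simp: div_less_iff_less_mult mult.commute elim!: dvdE)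
  ultimately show ?thesis
    unfolding exec_count_def using card_inj_on_le[of _ ?C "{..<L div tau X}"] by simp
qed

lemma sum_exec_count_le:
  assumes "finite S" and "\<And>X. X \<in> S \<Longrightarrow> tau X > 0"
  shows "(\<Sum>X\<in>S. \<Sum>i=1..tau X. exec_count tau \<sigma> L X i) \<le> L"
proof -
  let ?B = "\<lambda>X. {u. u < L \<and> \<sigma> u = Some X}"
  have "(\<Sum>X\<in>S. \<Sum>i=1..tau X. exec_count tau \<sigma> L X i) = (\<Sum>X\<in>S. card (?B X))"
    using assms(2) by (intro sum.cong refl sum_exec_count_eq_card)
  also have "\<dots> = card (\<Union>X\<in>S. ?B X)"
    by (rule card_UN_disjoint[symmetric]) (use assms(1) in auto)
  also have "\<dots> \<le> card {..<L}"
    by (rule card_mono) auto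
  finally show ?thesis by simp
qed

lemma frame_average_above_requirement:
  assumes "finite S" and "frame_len S tau > 0" and "\<epsilon> > 0"
    and "\<forall>X\<in>S. ereal (qstar X) \<le> avg_reward S tau r \<sigma> X"
  shows "\<exists>N\<ge>1. \<forall>X\<in>S. qstar X - \<epsilon> < total_reward tau r \<sigma> X (N * frame_len S tau) / real N"
proof -
  let ?T = "frame_len S tau"
  have "\<forall>X\<in>S. \<forall>\<^sub>F t in sequentially.
      qstar X - \<epsilon> < total_reward tau r \<sigma> X t / (real t / real ?T)"
  proof
    fix X assume "X \<in> S"
    then have "ereal (qstar X) \<le> liminf (\<lambda>t. ereal (total_reward tau r \<sigma> X t / (real t / real ?T)))"
      using assms(4) unfolding avg_reward_def by blast
    moreover have "ereal (qstar X - \<epsilon>) < ereal (qstar X)"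
      using assms(3) by simp
    ultimately have "ereal (qstar X - \<epsilon>) < liminf (\<lambda>t. ereal (total_reward tau r \<sigma> X t / (real t / real ?T)))"
      by (rule less_le_trans[rotated])
    then have "\<forall>\<^sub>F t in sequentially.
        ereal (qstar X - \<epsilon>) < ereal (total_reward tau r \<sigma> X t / (real t / real ?T))"
      by (rule less_LiminfD)
    then show "\<forall>\<^sub>F t in sequentially. qstar X - \<epsilon> < total_reward tau r \<sigma> X t / (real t / real ?T)"
      by simp
  qed
  then have "\<forall>\<^sub>F t in sequentially. \<forall>X\<in>S.
      qstar X - \<epsilon> < total_reward tau r \<sigma> X t / (real t / real ?T)"
    by (rule eventually_ball_finite[OF assms(1)])
  then obtain t0 where t0: "\<And>t. t \<ge> t0 \<Longrightarrow> \<forall>X\<in>S.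
      qstar X - \<epsilon> < total_reward tau r \<sigma> X t / (real t / real ?T)"
    unfolding eventually_sequentially by blast
  have "Suc t0 * ?T \<ge> t0"
    using assms(2) by (cases ?T) auto
  then have "\<forall>X\<in>S. qstar X - \<epsilon>
      < total_reward tau r \<sigma> X (Suc t0 * ?T) / (real (Suc t0 * ?T) / real ?T)"
    by (rule t0)
  moreover have "real (Suc t0 * ?T) / real ?T = real (Suc t0)"
    using assms(2) by (simp only: of_nat_mult) simp
  ultimately have "\<forall>X\<in>S. qstar X - \<epsilon> < total_reward tau r \<sigma> X (Suc t0 * ?T) / real (Suc t0)"
    by (simp only:)
  then show ?thesis
    by (intro exI[of _ "Suc t0"]) simp
qed

definition exec_freq :: "'a set \<Rightarrow> ('a \<Rightarrow> nat) \<Rightarrow> (nat \<Rightarrow> 'a option) \<Rightarrow> nat \<Rightarrow> 'a \<Rightarrow> nat \<Rightarrow> real" where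
  "exec_freq S tau \<sigma> N X i = real (exec_count tau \<sigma> (N * frame_len S tau) X i) / real N"

lemma exec_freq_reward:
  assumes "tau X > 0"
  shows "(\<Sum>i=1..tau X. exec_freq S tau \<sigma> N X i * r X i)
       = total_reward tau r \<sigma> X (N * frame_len S tau) / real N"
  using total_reward_eq_exec_count[where tau=tau and X=X and r=r and \<sigma>=\<sigma>] assms
  unfolding exec_freq_def by (simp add: sum_divide_distrib)

lemma exec_freq_bounds:
  assumes "X \<in> S" and "tau X > 0" and "N \<ge> 1"
  shows "0 \<le> exec_freq S tau \<sigma> N X i \<and> exec_freq S tau \<sigma> N X i \<le> real (frame_len S tau) / real (tau X)"
proof -
  let ?L = "N * frame_len S tau"
  have dvd: "tau X dvd ?L"
    using dvd_frame_len[OF assms(1)] by simp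
  have "real (exec_count tau \<sigma> ?L X i) \<le> real (?L div tau X)"
    using exec_count_le_periods[of tau X ?L \<sigma> i] assms(2) dvd by simp
  also have "\<dots> = real N * real (frame_len S tau) / real (tau X)"
    using real_of_nat_div[OF dvd] by simp
  finally show ?thesis
    unfolding exec_freq_def using assms(3) by (simp add: field_simps)
qed

lemma sum_exec_freq_le:
  assumes "finite S" and "\<And>X. X \<in> S \<Longrightarrow> tau X > 0" and "N \<ge> 1"
  shows "(\<Sum>X\<in>S. \<Sum>i=1..tau X. exec_freq S tau \<sigma> N X i) \<le> real (frame_len S tau)"
proof -
  have "(\<Sum>X\<in>S. \<Sum>i=1..tau X. exec_freq S tau \<sigma> N X i)
      = real (\<Sum>X\<in>S. \<Sum>i=1..tau X. exec_count tau \<sigma> (N * frame_len S tau) X i) / real N"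
    unfolding exec_freq_def by (simp add: sum_divide_distrib)
  also have "\<dots> \<le> real (N * frame_len S tau) / real N"
  proof (rule divide_right_mono)
    show "real (\<Sum>X\<in>S. \<Sum>i=1..tau X. exec_count tau \<sigma> (N * frame_len S tau) X i)
        \<le> real (N * frame_len S tau)"
      using sum_exec_count_le[of S tau \<sigma> "N * frame_len S tau"] assms(1,2)
      by (simp only: of_nat_le_iff)
  qed simp
  also have "\<dots> = real (frame_len S tau)"
    using assms(3) by simp
  finally show ?thesis .
qed

lemma finite_family_convergent_subseq:
  fixes x :: "nat \<Rightarrow> 'i \<Rightarrow> 'a::{heine_borel, real_normed_vector}"
  assumes "finite I" and "\<And>n i. i \<in> I \<Longrightarrow> norm (x n i) \<le> B"
  shows "\<exists>h l. strict_mono h \<and> (\<forall>i\<in>I. (\<lambda>n. x (h n) i) \<longlonglongrightarrow> l i)"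
  using assms
proof (induction I rule: finite_induct)
  case empty
  show ?case
    using strict_mono_id by blast
next
  case (insert j I)
  then obtain h l where h: "strict_mono h" and l: "\<forall>i\<in>I. (\<lambda>n. x (h n) i) \<longlonglongrightarrow> l i"
    by blast
  have "bounded (range (\<lambda>n. x (h n) j))"
    unfolding bounded_iff using insert.prems by auto
  then obtain g lj where g: "strict_mono g" and lj: "((\<lambda>n. x (h n) j) \<circ> g) \<longlonglongrightarrow> lj"
    using bounded_imp_convergent_subsequence by blast
  have "\<forall>i\<in>I. ((\<lambda>n. x (h n) i) \<circ> g) \<longlonglongrightarrow> l i"
    using l g LIMSEQ_subseq_LIMSEQ by blast
  then have "\<forall>i\<in>insert j I. (\<lambda>n. x ((h \<circ> g) n) i) \<longlonglongrightarrow> (l(j := lj)) i"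
    using lj by (auto simp: o_def)
  moreover have "strict_mono (h \<circ> g)"
    using h g by (rule strict_mono_o)
  ultimately show ?case by blast
qed

lemma lp_solution_of_schedule:
  assumes fin: "finite S" and tau_pos: "\<And>X. X \<in> S \<Longrightarrow> tau X > 0"
    and good: "\<forall>X\<in>S. ereal (qstar X) \<le> avg_reward S tau r \<sigma> X"
  shows "\<exists>f :: 'a \<Rightarrow> nat \<Rightarrow> real.
           (\<forall>X\<in>S. qstar X \<le> (\<Sum>i=1..tau X. f X i * r X i)) \<and>
           (\<forall>X\<in>S. \<forall>i\<in>{1..tau X}.
               0 \<le> f X i \<and> f X i \<le> real (frame_len S tau) / real (tau X)) \<and>
           (\<Sum>X\<in>S. \<Sum>i=1..tau X. f X i) \<le> real (frame_len S tau)"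
proof -
  let ?T = "frame_len S tau"
  have "?T > 0"
    using fin tau_pos by (rule frame_len_pos)
  then have "\<forall>n. \<exists>N\<ge>1. \<forall>X\<in>S.
      qstar X - inverse (real (Suc n)) < total_reward tau r \<sigma> X (N * ?T) / real N"
    using frame_average_above_requirement[OF fin _ _ good] by simp
  then obtain N where N1: "\<And>n. N n \<ge> 1" and N: "\<And>n X. X \<in> S \<Longrightarrow>
      qstar X - inverse (real (Suc n)) < total_reward tau r \<sigma> X (N n * ?T) / real (N n)"
    by metis
  define x where "x n = (\<lambda>(X, i). exec_freq S tau \<sigma> (N n) X i)" for n
  have "norm (x n p) \<le> real ?T" if p_mem: "p \<in> Sigma S (\<lambda>X. {1..tau X})" for n p
  proof -
    obtain X i where p: "p = (X, i)" and X: "X \<in> S"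
      using p_mem by auto
    have "real ?T / real (tau X) \<le> real ?T / 1"
      using tau_pos[OF X] by (intro divide_left_mono) simp_all
    moreover have "x n p = exec_freq S tau \<sigma> (N n) X i"
      unfolding x_def p by simp
    ultimately show ?thesis
      using exec_freq_bounds[of X S tau "N n" \<sigma> i] X tau_pos[OF X] N1[of n] by auto
  qed
  then obtain h l where h: "strict_mono h"
    and lim_p: "\<forall>p\<in>Sigma S (\<lambda>X. {1..tau X}). (\<lambda>n. x (h n) p) \<longlonglongrightarrow> l p"
    using finite_family_convergent_subseq[of "Sigma S (\<lambda>X. {1..tau X})"] fin by blast
  define f where "f X i = l (X, i)" for X i
  have lim: "(\<lambda>n. exec_freq S tau \<sigma> (N (h n)) X i) \<longlonglongrightarrow> f X i" if "X \<in> S" "i \<in> {1..tau X}" for X i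
  proof -
    have "(X, i) \<in> Sigma S (\<lambda>X. {1..tau X})"
      using that by simp
    then show ?thesis
      using lim_p unfolding f_def x_def by auto
  qed
  have "qstar X \<le> (\<Sum>i=1..tau X. f X i * r X i)" if X: "X \<in> S" for X
  proof (rule LIMSEQ_le[OF LIMSEQ_inverse_real_of_nat_add_minus])
    show "(\<lambda>n. \<Sum>i=1..tau X. exec_freq S tau \<sigma> (N (h n)) X i * r X i) \<longlonglongrightarrow> (\<Sum>i=1..tau X. f X i * r X i)"
      using X by (intro tendsto_sum tendsto_mult_right lim)
    have "qstar X - inverse (real (Suc n)) \<le> (\<Sum>i=1..tau X. exec_freq S tau \<sigma> (N (h n)) X i * r X i)" for n
    proof -
      have "inverse (real (Suc (h n))) \<le> inverse (real (Suc n))"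
        using seq_suble[OF h, of n] by (simp add: le_imp_inverse_le)
      then show ?thesis
        using N[OF X, of "h n"] exec_freq_reward[of tau X S \<sigma> "N (h n)" r] tau_pos[OF X] by linarith
    qed
    then show "\<exists>n0. \<forall>n\<ge>n0. qstar X + - inverse (real (Suc n))
        \<le> (\<Sum>i=1..tau X. exec_freq S tau \<sigma> (N (h n)) X i * r X i)"
      by auto
  qed
  moreover have "0 \<le> f X i \<and> f X i \<le> real ?T / real (tau X)" if "X \<in> S" "i \<in> {1..tau X}" for X i
    using LIMSEQ_le_const[OF lim[OF that]] LIMSEQ_le_const2[OF lim[OF that]]
      exec_freq_bounds[of X S tau _ \<sigma> i] that(1) tau_pos[OF that(1)] N1 by blast
  moreover have "(\<Sum>X\<in>S. \<Sum>i=1..tau X. f X i) \<le> real ?T"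
  proof (rule LIMSEQ_le_const2)
    show "(\<lambda>n. \<Sum>X\<in>S. \<Sum>i=1..tau X. exec_freq S tau \<sigma> (N (h n)) X i)
        \<longlonglongrightarrow> (\<Sum>X\<in>S. \<Sum>i=1..tau X. f X i)"
      by (intro tendsto_sum lim) auto
    show "\<exists>n0. \<forall>n\<ge>n0. (\<Sum>X\<in>S. \<Sum>i=1..tau X. exec_freq S tau \<sigma> (N (h n)) X i) \<le> real ?T"
      using sum_exec_freq_le[of S tau, OF fin tau_pos N1] by blast
  qed
  ultimately show ?thesis
    by (intro exI[of _ f]) blast
qed

theorem lemma1:
  fixes S :: "'a set" and tau :: "'a \<Rightarrow> nat" and r :: "'a \<Rightarrow> nat \<Rightarrow> real"
    and qstar :: "'a \<Rightarrow> real"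
    and M :: "'b measure" and sched :: "'b \<Rightarrow> nat \<Rightarrow> 'a option"
  assumes fin: "finite S"
    and tau_pos: "\<And>X. X \<in> S \<Longrightarrow> tau X > 0"
    and r_mono: "\<And>X i j. X \<in> S \<Longrightarrow> 1 \<le> i \<Longrightarrow> i \<le> j \<Longrightarrow> j \<le> tau X \<Longrightarrow> r X j \<le> r X i"
    and r_nonneg: "\<And>X i. X \<in> S \<Longrightarrow> 1 \<le> i \<Longrightarrow> i \<le> tau X \<Longrightarrow> 0 \<le> r X i"
    and q_pos: "\<And>X. X \<in> S \<Longrightarrow> qstar X > 0"
    and feasible: "fulfills M sched S tau r qstar"
  shows "\<exists>f :: 'a \<Rightarrow> nat \<Rightarrow> real.
           (\<forall>X\<in>S. qstar X \<le> (\<Sum>i=1..tau X. f X i * r X i)) \<and>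
           (\<forall>X\<in>S. \<forall>i\<in>{1..tau X}.
               0 \<le> f X i \<and> f X i \<le> real (frame_len S tau) / real (tau X)) \<and>
           (\<Sum>X\<in>S. \<Sum>i=1..tau X. f X i) \<le> real (frame_len S tau)"
proof -
  have M: "prob_space M"
    and requirements: "\<forall>X\<in>S. AE \<omega> in M. ereal (qstar X) \<le> avg_reward S tau r (sched \<omega>) X"
    using feasible unfolding fulfills_def by auto
  have "AE \<omega> in M. \<forall>X\<in>S. ereal (qstar X) \<le> avg_reward S tau r (sched \<omega>) X"
    using requirements by (rule eventually_ball_finite[OF fin])
  then obtain \<omega> where "\<forall>X\<in>S. ereal (qstar X) \<le> avg_reward S tau r (sched \<omega>) X"
    using prob_space.AE_imp_ex_in_space[OF M] by blast
  then show ?thesis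
    using lp_solution_of_schedule[of S tau qstar r "sched \<omega>"] fin tau_pos by simp
qed

end
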